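(* Let $(G,c)$ be an edge-colored DAG in which all edges have the same color, and suppose $G$ has at least two edges. If $(H,c')$ is any edge-colored DAG on the same vertex set in which all edges have the same color and $\mathcal M(H,c')=\mathcal M(G,c)$, then $H=G$.
   Context: An edge-colored DAG $(G,c)$, $G=(V,E)$, has a coloring of $V\sqcup E$ in which every vertex forms its own color class (edge colors distinct from vertex colors). $\mathcal M(G,c)$ is the set of $(I-\Lambda)^{-T}\Omega(I-\Lambda)^{-1}$ with $\Omega=\mathrm{diag}(\omega_i)$, $\omega_i>0$ arbitrary, $\lambda_{ij}=0$ for $ij\notin E$, and $\lambda_{ij}=\lambda_{kl}$ whenever $c(ij)=c(kl)$; with a single edge color this means all $\lambda_{ij}$, $ij\in E$, equal a common real number. *)

theory Defs
  imports "HOL-Analysis.Analysis"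
begin

text \<open>A DAG on the (finite) vertex set given by the type 'n: an acyclic edge relation.
  Edge (i,j) means i -> j. Acyclicity excludes self-loops.\<close>
definition is_dag :: "('n::finite \<times> 'n) set \<Rightarrow> bool" where
  "is_dag E \<longleftrightarrow> acyclic E"

definition diag_mat :: "('n::finite \<Rightarrow> real) \<Rightarrow> real^'n^'n" where
  "diag_mat w = (\<chi> i j. if i = j then w i else 0)"

text \<open>Every vertex forms its own color class,
  so the error variances omega_i are unrestricted positive reals; edge coloring c
  imposes equality of lambda on equally colored edges.\<close>
definition colored_model ::
    "('n::finite \<times> 'n) set \<Rightarrow> ('n \<times> 'n \<Rightarrow> 'c) \<Rightarrow> (real^'n^'n) set" where
  "colored_model E c =
    {transpose (matrix_inv (mat 1 - L)) ** diag_mat w ** matrix_inv (mat 1 - L) | L w.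
       (\<forall>i. w i > 0) \<and>
       (\<forall>i j. (i, j) \<notin> E \<longrightarrow> L $ i $ j = 0) \<and>
       (\<forall>e\<in>E. \<forall>f\<in>E. c e = c f \<longrightarrow> L $ fst e $ snd e = L $ fst f $ snd f)}"

end

theory Submission
  imports Defs
begin

text \<open>
  With a single edge colour, \<open>S \<in> \<M>(G)\<close> iff \<open>(I - l A\<^sub>G)\<^sup>T S (I - l A\<^sub>G)\<close> is a positive
  diagonal matrix for some \<open>l\<close>. We show that \<open>\<M>(E) = \<M>(F)\<close> forces \<open>F = E\<close> unless \<open>E\<close> is a
  single edge and \<open>F\<close> its reversal, by induction on \<open>|E| + |F|\<close>.

  Let \<open>s\<close> be a sink of \<open>F\<close>. Then \<open>S\<close> maps the \<open>s\<close>-th column of \<open>I - l A\<^sub>F\<close> to a multiple of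
  \<open>e\<^sub>s\<close>, so the \<open>s\<close>-th column of \<open>S\<inverse>\<close> is supported on \<open>s\<close> and its \<open>F\<close>-parents and is
  constant on the parents. If \<open>s\<close> is also a sink of \<open>E\<close>, this shows that \<open>s\<close> has the same
  parents in \<open>E\<close> and \<open>F\<close>. Otherwise, computing that column for \<open>E\<close> with two different
  coefficients shows that \<open>s\<close> is a source of \<open>E\<close> whose unique child \<open>c\<close> has no other
  parent, and that \<open>c\<close> is the only parent of \<open>s\<close> in \<open>F\<close>. In both cases deleting the edges
  into \<open>s\<close> from \<open>F\<close> and the corresponding edges from \<open>E\<close> keeps the two models equal: a
  covariance matrix of the smaller model is lifted by a shear in the \<open>s\<close>-th coordinate and
  projected back by making \<open>X\<^sub>s\<close> independent of the rest. The induction hypothesis then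
  leaves a few small configurations, which explicit covariance entries rule out.
\<close>

section \<open>Linear structural equation models with one edge coefficient\<close>

definition adjacency :: "('n::finite \<times> 'n) set \<Rightarrow> real^'n^'n" where
  "adjacency G = (\<chi> i j. if (i, j) \<in> G then 1 else 0)"

definition sem_matrix :: "('n::finite \<times> 'n) set \<Rightarrow> real \<Rightarrow> real^'n^'n" where
  "sem_matrix G l = mat 1 - l *\<^sub>R adjacency G"

lemma sem_matrix_nth [simp]:
  "sem_matrix G l $ i $ j = (if i = j then 1 else 0) - (if (i, j) \<in> G then l else 0)"
  by (simp add: sem_matrix_def adjacency_def mat_def)

lemma sem_matrix_zero: "sem_matrix G 0 = mat 1"
  by (simp add: sem_matrix_def)

lemma transpose_sem_matrix: "transpose (sem_matrix G l) = sem_matrix (G\<inverse>) l"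
  by (simp add: vec_eq_iff transpose_def)

lemma acyclic_loop_free: "acyclic G \<Longrightarrow> (x, x) \<notin> G"
  unfolding acyclic_def by blast

lemma acyclic_reverse_edge: "acyclic G \<Longrightarrow> (a, b) \<in> G \<Longrightarrow> (b, a) \<notin> G"
  unfolding acyclic_def by (meson trancl.trancl_into_trancl r_into_trancl)

lemma sem_matrix_kernel:
  fixes G :: "('n::finite \<times> 'n) set"
  assumes "acyclic G" and "sem_matrix G l *v x = 0"
  shows "x = 0"
proof -
  have wf_conv: "wf (G\<inverse>)"
    using assms(1) by (intro finite_acyclic_wf_converse) simp_all
  have "x $ i = 0" for i
  proof (induction i rule: wf_induct[OF wf_conv])
    case (1 i)
    then have "\<And>j. sem_matrix G l $ i $ j * x $ j = (if i = j then x $ j else 0)"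
      by auto
    then have "(sem_matrix G l *v x) $ i = x $ i"
      by (simp add: matrix_vector_mult_def)
    then show ?case using assms(2) by simp
  qed
  then show ?thesis by (simp add: vec_eq_iff)
qed

lemma invertible_sem_matrix:
  fixes G :: "('n::finite \<times> 'n) set"
  assumes "acyclic G"
  shows "invertible (sem_matrix G l)"
  using matrix_left_invertible_ker sem_matrix_kernel[OF assms] invertible_left_inverse by blast

lemma sem_matrix_transpose_inj:
  fixes G :: "('n::finite \<times> 'n) set"
  assumes "acyclic G" and "transpose (sem_matrix G l) *v x = transpose (sem_matrix G l) *v y"
  shows "x = y"
proof -
  have "sem_matrix (G\<inverse>) l *v (x - y) = 0"
    using assms(2) by (simp add: transpose_sem_matrix[symmetric] matrix_vector_mult_diff_distrib
        del: transpose_matrix_vector)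
  then show ?thesis
    using sem_matrix_kernel[of "G\<inverse>" l "x - y"] assms(1) by simp
qed

lemma matrix_inv_mult:
  assumes "invertible (A::real^'n::finite^'n)"
  shows "A ** matrix_inv A = mat 1" and "matrix_inv A ** A = mat 1"
proof -
  have "A ** matrix_inv A = mat 1 \<and> matrix_inv A ** A = mat 1"
    unfolding matrix_inv_def by (rule someI_ex) (use assms invertible_def in blast)
  then show "A ** matrix_inv A = mat 1" "matrix_inv A ** A = mat 1" by auto
qed

definition bform :: "real^'n::finite^'n \<Rightarrow> real^'n \<Rightarrow> real^'n \<Rightarrow> real" where
  "bform S x y = x \<bullet> (S *v y)"

lemma bform_add [simp]:
  "bform S (x + y) z = bform S x z + bform S y z"
  "bform S z (x + y) = bform S z x + bform S z y"
  by (simp_all add: bform_def inner_add_left inner_add_right matrix_vector_right_distrib)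

lemma bform_diff [simp]:
  "bform S (x - y) z = bform S x z - bform S y z"
  "bform S z (x - y) = bform S z x - bform S z y"
  by (simp_all add: bform_def inner_diff_left inner_diff_right matrix_vector_mult_diff_distrib)

lemma bform_scaleR [simp]:
  "bform S (c *\<^sub>R x) z = c * bform S x z"
  "bform S z (c *\<^sub>R x) = c * bform S z x"
  by (simp_all add: bform_def matrix_vector_mult_scaleR)

lemma bform_axis: "bform S (axis i 1) (axis j 1) = S $ i $ j"
  by (simp add: bform_def matrix_vector_mult_basis inner_axis' column_def)

lemma bform_congruence:
  "bform (A ** S ** transpose B) x y = bform S (transpose A *v x) (transpose B *v y)"
  by (simp add: bform_def dot_lmul_matrix matrix_vector_mul_assoc[symmetric])

lemma congruence_nth:
  fixes A B S :: "real^'n::finite^'n"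
  shows "(transpose A ** S ** B) $ i $ j = bform S (column i A) (column j B)"
  using bform_congruence[of "transpose A" S "transpose B" "axis i 1" "axis j 1"]
  by (simp add: bform_axis matrix_vector_mult_basis del: transpose_matrix_vector)

definition sem_col :: "('n::finite \<times> 'n) set \<Rightarrow> real \<Rightarrow> 'n \<Rightarrow> real^'n" where
  "sem_col G l i = column i (sem_matrix G l)"

lemma sem_col_nth [simp]:
  "sem_col G l i $ k = (if k = i then 1 else 0) - (if (k, i) \<in> G then l else 0)"
  by (simp add: sem_col_def column_def)

lemma sem_col_eq: "sem_col G l i = sem_matrix G l *v axis i 1"
  by (simp add: sem_col_def matrix_vector_mult_basis)

definition represents :: "('n::finite \<times> 'n) set \<Rightarrow> real \<Rightarrow> ('n \<Rightarrow> real) \<Rightarrow> real^'n^'n \<Rightarrow> bool"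
  where "represents G l w S \<longleftrightarrow>
    (\<forall>i. 0 < w i) \<and> transpose (sem_matrix G l) ** S ** sem_matrix G l = diag_mat w"

definition sem_model :: "('n::finite \<times> 'n) set \<Rightarrow> (real^'n^'n) set" where
  "sem_model G = {S. \<exists>l w. represents G l w S}"

lemma represents_iff_bform:
  "represents G l w S \<longleftrightarrow> (\<forall>i. 0 < w i) \<and>
     (\<forall>i j. bform S (sem_col G l i) (sem_col G l j) = (if i = j then w i else 0))"
  unfolding represents_def by (simp add: vec_eq_iff congruence_nth diag_mat_def sem_col_def)

lemma represents_bform:
  "represents G l w S \<Longrightarrow> bform S (sem_col G l i) (sem_col G l j) = (if i = j then w i else 0)"
  by (simp add: represents_iff_bform)

lemma represents_pos: "represents G l w S \<Longrightarrow> 0 < w i"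
  by (simp add: represents_def)

definition sem_covariance :: "('n::finite \<times> 'n) set \<Rightarrow> real \<Rightarrow> ('n \<Rightarrow> real) \<Rightarrow> real^'n^'n"
  where "sem_covariance G l w =
    transpose (matrix_inv (sem_matrix G l)) ** diag_mat w ** matrix_inv (sem_matrix G l)"

lemma represents_iff_covariance:
  fixes G :: "('n::finite \<times> 'n) set"
  assumes "acyclic G"
  shows "represents G l w S \<longleftrightarrow> (\<forall>i. 0 < w i) \<and> S = sem_covariance G l w"
proof -
  let ?T = "sem_matrix G l"
  let ?U = "matrix_inv ?T"
  have inv: "invertible ?T"
    using invertible_sem_matrix[OF assms] .
  have TU: "?T ** ?U = mat 1" and UT: "?U ** ?T = mat 1"
    using matrix_inv_mult[OF inv] by auto
  have tTU: "transpose ?T ** transpose ?U = mat 1" and tUT: "transpose ?U ** transpose ?T = mat 1"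
    using TU UT by (metis matrix_transpose_mul transpose_mat)+
  have "transpose ?T ** S ** ?T = diag_mat w \<longleftrightarrow> S = transpose ?U ** diag_mat w ** ?U"
  proof
    assume "transpose ?T ** S ** ?T = diag_mat w"
    then have "transpose ?U ** diag_mat w ** ?U = transpose ?U ** (transpose ?T ** S ** ?T) ** ?U"
      by simp
    also have "\<dots> = (transpose ?U ** transpose ?T) ** S ** (?T ** ?U)"
      by (simp add: matrix_mul_assoc)
    finally show "S = transpose ?U ** diag_mat w ** ?U"
      by (simp add: tUT TU)
  next
    assume "S = transpose ?U ** diag_mat w ** ?U"
    then have "transpose ?T ** S ** ?T = transpose ?T ** (transpose ?U ** diag_mat w ** ?U) ** ?T"
      by simp
    also have "\<dots> = (transpose ?T ** transpose ?U) ** diag_mat w ** (?U ** ?T)"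
      by (simp add: matrix_mul_assoc)
    finally show "transpose ?T ** S ** ?T = diag_mat w"
      by (simp add: tTU UT)
  qed
  then show ?thesis
    unfolding represents_def sem_covariance_def by blast
qed

lemma represents_symmetric:
  fixes G :: "('n::finite \<times> 'n) set"
  assumes "acyclic G" and "represents G l w S"
  shows "transpose S = S"
proof -
  let ?U = "matrix_inv (sem_matrix G l)"
  have "transpose (diag_mat w) = diag_mat w"
    by (simp add: vec_eq_iff transpose_def diag_mat_def)
  then have "transpose (transpose ?U ** diag_mat w ** ?U) = transpose ?U ** diag_mat w ** ?U"
    by (simp only: matrix_transpose_mul transpose_transpose matrix_mul_assoc)
  then show ?thesis
    using assms by (simp add: represents_iff_covariance sem_covariance_def)
qed

lemma sem_model_eq:
  fixes G :: "('n::finite \<times> 'n) set"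
  assumes "acyclic G"
  shows "sem_model G = {sem_covariance G l w | l w. \<forall>i. 0 < w i}"
  using represents_iff_covariance[OF assms] unfolding sem_model_def by blast

lemma single_color_coefficients:
  assumes "\<forall>e\<in>E. \<forall>f\<in>E. c e = c f"
  shows "((\<forall>i j. (i, j) \<notin> E \<longrightarrow> L $ i $ j = 0) \<and>
          (\<forall>e\<in>E. \<forall>f\<in>E. c e = c f \<longrightarrow> L $ fst e $ snd e = L $ fst f $ snd f))
     \<longleftrightarrow> (\<exists>l. L = l *\<^sub>R adjacency E)"
proof
  assume L: "(\<forall>i j. (i, j) \<notin> E \<longrightarrow> L $ i $ j = 0) \<and>
             (\<forall>e\<in>E. \<forall>f\<in>E. c e = c f \<longrightarrow> L $ fst e $ snd e = L $ fst f $ snd f)"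
  obtain l where l: "\<forall>e\<in>E. L $ fst e $ snd e = l"
  proof (cases "E = {}")
    case False
    then obtain e0 where "e0 \<in> E" by blast
    then show ?thesis using that[of "L $ fst e0 $ snd e0"] L assms by blast
  qed simp
  have "L $ i $ j = (l *\<^sub>R adjacency E) $ i $ j" for i j
    using L l by (cases "(i, j) \<in> E") (auto simp: adjacency_def)
  then show "\<exists>l. L = l *\<^sub>R adjacency E"
    by (auto simp: vec_eq_iff)
next
  assume "\<exists>l. L = l *\<^sub>R adjacency E"
  then obtain l where "L = l *\<^sub>R adjacency E" ..
  then show "(\<forall>i j. (i, j) \<notin> E \<longrightarrow> L $ i $ j = 0) \<and>
             (\<forall>e\<in>E. \<forall>f\<in>E. c e = c f \<longrightarrow> L $ fst e $ snd e = L $ fst f $ snd f)"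
    by (simp add: adjacency_def)
qed

lemma colored_model_single_color:
  fixes E :: "('n::finite \<times> 'n) set"
  assumes "acyclic E" and "\<forall>e\<in>E. \<forall>f\<in>E. c e = c f"
  shows "colored_model E c = sem_model E"
proof -
  have "colored_model E c =
      {transpose (matrix_inv (mat 1 - L)) ** diag_mat w ** matrix_inv (mat 1 - L) | L w.
         (\<forall>i. 0 < w i) \<and> (\<exists>l. L = l *\<^sub>R adjacency E)}"
    unfolding colored_model_def single_color_coefficients[OF assms(2)] by simp
  also have "\<dots> = sem_model E"
    unfolding sem_model_eq[OF assms(1)] sem_covariance_def sem_matrix_def by blast
  finally show ?thesis .
qed

section \<open>Sinks, sources and columns of the precision matrix\<close>

lemma diag_mat_mult: "diag_mat w *v z = (\<chi> i. w i * z $ i)"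
  by (simp add: vec_eq_iff diag_mat_def matrix_vector_mult_def if_distrib if_distribR cong: if_cong)

lemma represents_transform:
  assumes "represents G l w S"
  shows "transpose (sem_matrix G l) *v (S *v (sem_matrix G l *v z)) = (\<chi> i. w i * z $ i)"
  using assms unfolding represents_def
  by (simp add: matrix_vector_mul_assoc matrix_mul_assoc diag_mat_mult del: transpose_matrix_vector)

lemma represents_inj:
  fixes G :: "('n::finite \<times> 'n) set"
  assumes G: "acyclic G" and S: "represents G l w S" and eq: "S *v x = S *v y"
  shows "x = y"
proof -
  let ?T = "sem_matrix G l"
  define z where "z = matrix_inv ?T *v (x - y)"
  have xy: "x - y = ?T *v z"
    unfolding z_def
    by (simp add: matrix_vector_mul_assoc matrix_inv_mult(1)[OF invertible_sem_matrix[OF G]])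
  have "(\<chi> i. w i * z $ i) = 0"
    using represents_transform[OF S, of z] eq xy[symmetric]
    by (simp add: matrix_vector_mult_diff_distrib del: transpose_matrix_vector)
  then have "z = 0"
    using represents_pos[OF S] by (simp add: vec_eq_iff) (metis less_irrefl)
  then show ?thesis
    using xy by simp
qed

lemma represents_sink_column:
  fixes G :: "('n::finite \<times> 'n) set"
  assumes G: "acyclic G" and S: "represents G l w S" and sink: "\<forall>j. (s, j) \<notin> G"
  shows "S *v sem_col G l s = w s *\<^sub>R axis s 1"
proof -
  let ?T = "sem_matrix G l"
  have "(\<chi> i. w i * axis s 1 $ i) = w s *\<^sub>R axis s (1::real)"
    by (simp add: vec_eq_iff axis_def)
  then have "transpose ?T *v (S *v sem_col G l s) = w s *\<^sub>R axis s 1"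
    using represents_transform[OF S, of "axis s 1"] by (simp only: sem_col_eq)
  moreover have "transpose ?T *v (w s *\<^sub>R axis s 1) = w s *\<^sub>R axis s 1"
  proof -
    have "row s ?T = axis s 1"
      using sink by (simp add: row_def vec_eq_iff axis_def)
    then show ?thesis
      by (simp only: matrix_vector_mult_scaleR matrix_vector_mult_basis column_transpose)
  qed
  ultimately show ?thesis
    using sem_matrix_transpose_inj[OF G] by metis
qed

text \<open>Column \<open>s\<close> of the precision matrix
  \<open>S\<inverse> = (I - \<Lambda>) \<Omega>\<inverse> (I - \<Lambda>)\<^sup>T\<close>.\<close>
definition precision_col :: "('n::finite \<times> 'n) set \<Rightarrow> real \<Rightarrow> ('n \<Rightarrow> real) \<Rightarrow> 'n \<Rightarrow> real^'n"
  where "precision_col G l w s = sem_matrix G l *v (\<chi> i. sem_matrix G l $ s $ i / w i)"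

lemma represents_precision_col:
  fixes G :: "('n::finite \<times> 'n) set"
  assumes G: "acyclic G" and S: "represents G l w S"
  shows "S *v precision_col G l w s = axis s 1"
proof -
  let ?T = "sem_matrix G l"
  have "(\<chi> i. w i * (\<chi> i. ?T $ s $ i / w i) $ i) = row s ?T"
    using represents_pos[OF S] by (simp add: vec_eq_iff row_def less_imp_neq[symmetric])
  then have "transpose ?T *v (S *v precision_col G l w s) = row s ?T"
    unfolding precision_col_def using represents_transform[OF S] by metis
  moreover have "transpose ?T *v axis s 1 = row s ?T"
    by (simp only: matrix_vector_mult_basis column_transpose)
  ultimately show ?thesis
    using sem_matrix_transpose_inj[OF G] by metis
qed

lemma precision_col_nth:
  assumes "j \<noteq> s" and "(j, j) \<notin> G" and "(s, s) \<notin> G"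
  shows "precision_col G l w s $ j =
    l\<^sup>2 * (\<Sum>i\<in>UNIV. if (j, i) \<in> G \<and> (s, i) \<in> G then 1 / w i else 0)
    - l * ((if (s, j) \<in> G then 1 / w j else 0) + (if (j, s) \<in> G then 1 / w s else 0))"
proof -
  have entry: "\<And>i. sem_matrix G l $ j $ i * (sem_matrix G l $ s $ i / w i) =
      l\<^sup>2 * (if (j, i) \<in> G \<and> (s, i) \<in> G then 1 / w i else 0)
      - l * (if i = j then (if (s, j) \<in> G then 1 / w j else 0) else 0)
      - l * (if i = s then (if (j, s) \<in> G then 1 / w s else 0) else 0)"
    using assms by (auto simp: field_simps power2_eq_square)
  have "precision_col G l w s $ j =
      (\<Sum>i\<in>UNIV. sem_matrix G l $ j $ i * (sem_matrix G l $ s $ i / w i))"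
    by (simp add: precision_col_def matrix_vector_mult_def)
  also have "\<dots> = (\<Sum>i\<in>UNIV. l\<^sup>2 * (if (j, i) \<in> G \<and> (s, i) \<in> G then 1 / w i else 0)
      - l * (if i = j then (if (s, j) \<in> G then 1 / w j else 0) else 0)
      - l * (if i = s then (if (j, s) \<in> G then 1 / w s else 0) else 0))"
    by (simp only: entry)
  also have "\<dots> = l\<^sup>2 * (\<Sum>i\<in>UNIV. if (j, i) \<in> G \<and> (s, i) \<in> G then 1 / w i else 0)
      - l * (if (s, j) \<in> G then 1 / w j else 0) - l * (if (j, s) \<in> G then 1 / w s else 0)"
    by (simp only: sum_subtractf sum_distrib_left[symmetric]) simp
  finally show ?thesis
    by (simp add: algebra_simps)
qed

lemma sink_parents_agree:
  fixes G H :: "('n::finite \<times> 'n) set"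
  assumes G: "acyclic G" and H: "acyclic H"
    and SG: "represents G l w S" and SH: "represents H m v S"
    and sink_G: "\<forall>j. (t, j) \<notin> G" and sink_H: "\<forall>j. (t, j) \<notin> H"
  shows "sem_col G l t = sem_col H m t"
proof -
  have "S *v (v t *\<^sub>R sem_col G l t) = S *v (w t *\<^sub>R sem_col H m t)"
    using represents_sink_column[OF G SG sink_G] represents_sink_column[OF H SH sink_H]
    by (simp add: matrix_vector_mult_scaleR)
  then have eq: "v t *\<^sub>R sem_col G l t = w t *\<^sub>R sem_col H m t"
    using represents_inj[OF G SG] by blast
  have "(t, t) \<notin> G"
    using acyclic_loop_free[OF G] .
  moreover have "(t, t) \<notin> H"
    using acyclic_loop_free[OF H] .
  ultimately have "v t = w t"
    using arg_cong[OF eq, of "\<lambda>x. x $ t"] by simp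
  then show ?thesis
    using eq represents_pos[OF SG, of t] by simp
qed

lemma sink_precision_col:
  fixes G H :: "('n::finite \<times> 'n) set"
  assumes G: "acyclic G" and H: "acyclic H"
    and SG: "represents G l w S" and SH: "represents H m v S" and sink: "\<forall>j. (s, j) \<notin> H"
  shows "\<exists>k. \<forall>j. j \<noteq> s \<longrightarrow> precision_col G l w s $ j = (if (j, s) \<in> H then k else 0)"
proof -
  have "S *v sem_col H m s = S *v (v s *\<^sub>R precision_col G l w s)"
    using represents_sink_column[OF H SH sink] represents_precision_col[OF G SG]
    by (simp add: matrix_vector_mult_scaleR)
  then have eq: "sem_col H m s = v s *\<^sub>R precision_col G l w s"
    using represents_inj[OF G SG] by blast
  have "precision_col G l w s $ j = (if (j, s) \<in> H then - m / v s else 0)" if "j \<noteq> s" for j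
    using arg_cong[OF eq, of "\<lambda>x. x $ j"] that represents_pos[OF SH, of s]
    by (cases "(j, s) \<in> H") (auto simp: field_simps)
  then show ?thesis by blast
qed

lemma represents_source_edge:
  assumes S: "represents G l w S"
    and a: "\<forall>k. (k, a) \<notin> G" and b: "\<forall>k. (k, b) \<in> G \<longleftrightarrow> k = a"
  shows "S $ a $ a = w a" and "S $ a $ b = l * w a" and "S $ b $ a = l * w a"
    and "S $ b $ b = w b + l\<^sup>2 * w a"
proof -
  have ab: "a \<noteq> b"
    using a b by blast
  have "axis a 1 = sem_col G l a"
    using a by (auto simp: vec_eq_iff axis_def)
  moreover have "axis b 1 = sem_col G l b + l *\<^sub>R sem_col G l a"
    using a b ab by (auto simp: vec_eq_iff axis_def)
  ultimately show "S $ a $ a = w a" and "S $ a $ b = l * w a" and "S $ b $ a = l * w a"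
    and "S $ b $ b = w b + l\<^sup>2 * w a"
    using represents_bform[OF S] ab by (simp_all add: bform_axis[symmetric] power2_eq_square)
qed

lemma reversed_source_edge:
  assumes SG: "represents G l w S" and SH: "represents H m v S"
    and a_G: "\<forall>k. (k, a) \<notin> G" and b_G: "\<forall>k. (k, b) \<in> G \<longleftrightarrow> k = a"
    and b_H: "\<forall>k. (k, b) \<notin> H" and a_H: "\<forall>k. (k, a) \<in> H \<longleftrightarrow> k = b"
  shows "m * (w b + l\<^sup>2 * w a) = l * w a"
  using represents_source_edge[OF SG a_G b_G] represents_source_edge[OF SH b_H a_H] by simp

lemma represents_source_path:
  assumes S: "represents G l w S" and x: "\<forall>k. (k, x) \<notin> G"
    and y: "\<forall>k. (k, y) \<in> G \<longleftrightarrow> k = x" and z: "\<forall>k. (k, z) \<in> G \<longleftrightarrow> k = y"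
  shows "S $ z $ y = l * (w y + l\<^sup>2 * w x)" and "S $ z $ z = w z + l\<^sup>2 * (w y + l\<^sup>2 * w x)"
proof -
  have xy: "x \<noteq> y" and yz: "y \<noteq> z" and xz: "x \<noteq> z"
    using x y z by metis+
  have "axis y 1 = sem_col G l y + l *\<^sub>R sem_col G l x"
    using x y xy by (auto simp: vec_eq_iff axis_def)
  moreover have "axis z 1 = sem_col G l z + l *\<^sub>R sem_col G l y + l\<^sup>2 *\<^sub>R sem_col G l x"
    using x y z xy yz xz by (auto simp: vec_eq_iff axis_def power2_eq_square)
  ultimately show "S $ z $ y = l * (w y + l\<^sup>2 * w x)"
    and "S $ z $ z = w z + l\<^sup>2 * (w y + l\<^sup>2 * w x)"
    using represents_bform[OF S] xy yz xz
    by (simp_all add: bform_axis[symmetric] power2_eq_square algebra_simps)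
qed

lemma represents_sink_single_parent:
  fixes G :: "('n::finite \<times> 'n) set"
  assumes G: "acyclic G" and S: "represents G l w S" and sink: "\<forall>j. (s, j) \<notin> G"
    and parent: "\<forall>k. (k, s) \<in> G \<longleftrightarrow> k = a"
  shows "S $ a $ s = l * S $ a $ a"
proof -
  have as: "a \<noteq> s"
    using parent acyclic_loop_free[OF G] by blast
  have "sem_col G l s = axis s 1 - l *\<^sub>R axis a 1"
    using parent as by (auto simp: vec_eq_iff axis_def)
  then have "(S *v sem_col G l s) $ a = S $ a $ s - l * S $ a $ a"
    by (simp add: matrix_vector_mult_diff_distrib matrix_vector_mult_scaleR
        matrix_vector_mult_basis column_def)
  moreover have "(S *v sem_col G l s) $ a = 0"
    using represents_sink_column[OF G S sink] as by (simp add: axis_def)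
  ultimately show ?thesis by simp
qed

section \<open>Isolating and shearing a vertex\<close>

text \<open>\<open>isolate s t S\<close> is the covariance matrix obtained by replacing \<open>X\<^sub>s\<close> with an independent
  variable of variance \<open>t\<close>.\<close>
definition isolate :: "'n::finite \<Rightarrow> real \<Rightarrow> real^'n^'n \<Rightarrow> real^'n^'n" where
  "isolate s t S = (\<chi> i j. if i = s \<or> j = s then (if i = j then t else 0) else S $ i $ j)"

lemma isolate_nth [simp]:
  "isolate s t S $ i $ j = (if i = s \<or> j = s then (if i = j then t else 0) else S $ i $ j)"
  by (simp add: isolate_def)

lemma isolate_isolate: "isolate s t (isolate s t' S) = isolate s t S"
  by (simp add: vec_eq_iff)

lemma bform_isolate:
  assumes "x $ s = 0" and "y $ s = 0"
  shows "bform (isolate s t S) x y = bform S x y"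
proof -
  have eq: "x $ k * (isolate s t S *v y) $ k = x $ k * (S *v y) $ k" for k
  proof (cases "k = s")
    case False
    then have "(\<Sum>m\<in>UNIV. isolate s t S $ k $ m * y $ m) = (\<Sum>m\<in>UNIV. S $ k $ m * y $ m)"
      using assms by (intro sum.cong) auto
    then show ?thesis
      by (simp add: matrix_vector_mult_def)
  qed (use assms in simp)
  show ?thesis
    by (simp add: bform_def inner_vec_def eq)
qed

lemma isolate_mult_axis: "isolate s t S *v axis s 1 = t *\<^sub>R axis s 1"
  by (simp only: matrix_vector_mult_basis) (simp add: column_def vec_eq_iff axis_def)

lemma bform_isolate_axis:
  "bform (isolate s t S) x (axis s 1) = t * x $ s"
  "bform (isolate s t S) (axis s 1) y = t * y $ s"
proof -
  show "bform (isolate s t S) x (axis s 1) = t * x $ s"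
    by (simp add: bform_def isolate_mult_axis inner_axis)
  have "transpose (isolate s t S) = isolate s t (transpose S)"
    by (simp add: vec_eq_iff transpose_def)
  then have "axis s 1 v* isolate s t S = t *\<^sub>R axis s 1"
    using isolate_mult_axis[of s t "transpose S"] by (metis transpose_matrix_vector)
  then show "bform (isolate s t S) (axis s 1) y = t * y $ s"
    by (simp add: bform_def dot_lmul_matrix[symmetric] inner_axis')
qed

text \<open>\<open>shear s v ** S ** transpose (shear s v)\<close> is the covariance matrix of the random
  vector obtained from one with covariance \<open>S\<close> by replacing \<open>X\<^sub>s\<close> with \<open>X\<^sub>s + v \<bullet> X\<close>.\<close>
definition shear :: "'n::finite \<Rightarrow> real^'n \<Rightarrow> real^'n^'n" where
  "shear s v = (\<chi> i. if i = s then axis s 1 + v else axis i 1)"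

lemma transpose_shear_mult: "transpose (shear s v) *v x = x + x $ s *\<^sub>R v"
proof -
  have "(\<Sum>i\<in>UNIV. shear s v $ i $ j * x $ i) = x $ j + x $ s * v $ j" for j
  proof -
    have "\<And>i. shear s v $ i $ j * x $ i
        = (if i = j then x $ i else 0) + (if i = s then x $ s * v $ j else 0)"
      by (simp add: shear_def axis_def algebra_simps)
    then show ?thesis
      by (simp add: sum.distrib)
  qed
  then show ?thesis
    by (simp add: vec_eq_iff transpose_def matrix_vector_mult_def del: transpose_matrix_vector)
qed

lemma isolate_shear: "isolate s t (shear s v ** S ** transpose (shear s v)) = isolate s t S"
proof -
  have "(shear s v ** S ** transpose (shear s v)) $ i $ j = S $ i $ j" if "i \<noteq> s" "j \<noteq> s" for i j
  proof -
    have "\<And>k. column k (transpose (shear s v)) = (if k = s then axis s 1 + v else axis k 1)"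
      by (simp add: column_def transpose_def shear_def vec_eq_iff)
    then show ?thesis
      using congruence_nth[of "transpose (shear s v)" S "transpose (shear s v)" i j] that
      by (simp add: bform_axis)
  qed
  then show ?thesis
    by (simp add: vec_eq_iff)
qed

lemma isolate_isolated_vertex:
  fixes G :: "('n::finite \<times> 'n) set"
  assumes G: "acyclic G" and S: "represents G l w S"
    and no_children: "\<forall>j. (s, j) \<notin> G" and no_parents: "\<forall>j. (j, s) \<notin> G"
  shows "isolate s (w s) S = S"
proof -
  have "sem_col G l s = axis s 1"
    using no_parents by (simp add: vec_eq_iff axis_def)
  then have "column s S = w s *\<^sub>R axis s 1"
    using represents_sink_column[OF G S no_children] by (simp add: matrix_vector_mult_basis)
  then have col: "S $ j $ s = (if j = s then w s else 0)" for j
    by (auto simp: vec_eq_iff column_def axis_def)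
  have "S $ s $ j = (if j = s then w s else 0)" for j
  proof -
    have "S $ s $ j = transpose S $ j $ s"
      by (simp add: transpose_def)
    then show ?thesis
      using col[of j] represents_symmetric[OF G S] by simp
  qed
  then show ?thesis
    using col by (auto simp: vec_eq_iff)
qed

lemma represents_isolate_sink:
  assumes S: "represents G l w S" and sink: "\<forall>j. (s, j) \<notin> G" and t: "0 < t"
  shows "represents {p\<in>G. snd p \<noteq> s} l (w(s := t)) (isolate s t S)"
proof -
  let ?G' = "{p\<in>G. snd p \<noteq> s}"
  have col: "sem_col ?G' l i = (if i = s then axis s 1 else sem_col G l i)" for i
    by (auto simp: vec_eq_iff axis_def)
  have col_s: "sem_col G l i $ s = 0" if "i \<noteq> s" for i
    using sink that by simp
  show ?thesis
    unfolding represents_iff_bform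
  proof (intro conjI allI)
    fix i j
    show "bform (isolate s t S) (sem_col ?G' l i) (sem_col ?G' l j) = (if i = j then (w(s := t)) i else 0)"
      using represents_bform[OF S, of i j] col_s
      by (cases "i = s"; cases "j = s") (simp_all add: col bform_isolate bform_isolate_axis)
  qed (use represents_pos[OF S] t in simp)
qed

lemma represents_isolate_source_edge:
  assumes S: "represents G l w S" and t: "0 < t" and no_parents: "\<forall>j. (j, s) \<notin> G"
    and child: "\<forall>j. (s, j) \<in> G \<longleftrightarrow> j = c" and parent: "\<forall>j. (j, c) \<in> G \<longleftrightarrow> j = s"
  shows "represents (G - {(s, c)}) l (w(s := t, c := w c + l\<^sup>2 * w s)) (isolate s t S)"
proof -
  let ?G' = "G - {(s, c)}"
  let ?w' = "w(s := t, c := w c + l\<^sup>2 * w s)"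
  have sc: "s \<noteq> c"
    using no_parents child by blast
  have col: "sem_col ?G' l i =
      (if i = c then sem_col G l c + l *\<^sub>R sem_col G l s else sem_col G l i)" for i
    using no_parents parent sc by (auto simp: vec_eq_iff)
  have col_s: "sem_col ?G' l s = axis s 1"
    using no_parents by (auto simp: vec_eq_iff axis_def)
  have col_nth_s: "sem_col ?G' l i $ s = (if i = s then 1 else 0)" for i
    using no_parents child by simp
  have "0 \<le> l\<^sup>2 * w s"
    using represents_pos[OF S, of s] by simp
  then have "0 < w c + l\<^sup>2 * w s"
    using represents_pos[OF S, of c] by linarith
  then show ?thesis
    unfolding represents_iff_bform
  proof (intro conjI allI)
    fix i j
    show "bform (isolate s t S) (sem_col ?G' l i) (sem_col ?G' l j) = (if i = j then ?w' i else 0)"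
    proof (cases "i = s \<or> j = s")
      case True
      then consider "i = s" | "j = s" by blast
      then show ?thesis
        by cases (use sc in \<open>simp_all add: col_s col_nth_s bform_isolate_axis del: sem_col_nth\<close>)
    next
      case False
      then have "bform (isolate s t S) (sem_col ?G' l i) (sem_col ?G' l j) =
          bform S (sem_col ?G' l i) (sem_col ?G' l j)"
        by (intro bform_isolate) (simp_all add: col_nth_s del: sem_col_nth)
      then show ?thesis
        using represents_bform[OF S] False sc
        by (cases "i = c"; cases "j = c") (simp_all add: col power2_eq_square)
    qed
  qed (use represents_pos[OF S] t in simp)
qed

lemma represents_shear_sink:
  assumes sink: "\<forall>j. (s, j) \<notin> G" and S: "represents {p\<in>G. snd p \<noteq> s} l w S"
  shows "represents G l w (shear s (l *\<^sub>R (\<chi> k. if (k, s) \<in> G then 1 else 0)) ** S **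
           transpose (shear s (l *\<^sub>R (\<chi> k. if (k, s) \<in> G then 1 else 0))))"
proof -
  let ?N = "shear s (l *\<^sub>R (\<chi> k. if (k, s) \<in> G then 1 else 0))"
  have "transpose ?N *v sem_col G l i = sem_col {p\<in>G. snd p \<noteq> s} l i" for i
    using sink by (auto simp: transpose_shear_mult vec_eq_iff simp del: transpose_matrix_vector)
  then show ?thesis
    using S by (simp add: represents_iff_bform bform_congruence del: transpose_matrix_vector)
qed

text \<open>The shear replaces \<open>X\<^sub>s\<close> by \<open>X\<^sub>s + X\<^sub>c / (2 l)\<close>; with the variance
  \<open>w\<^sub>c / (4 l\<^sup>2)\<close> at the isolated vertex \<open>s\<close> this makes \<open>X\<^sub>c - l X\<^sub>s\<close> uncorrelated
  with \<open>X\<^sub>s\<close>, i.e. it creates the edge \<open>s \<rightarrow> c\<close> with coefficient \<open>l\<close>.\<close>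
lemma represents_shear_source_edge:
  assumes no_parents: "\<forall>j. (j, s) \<notin> G" and child: "\<forall>j. (s, j) \<in> G \<longleftrightarrow> j = c"
    and parent: "\<forall>j. (j, c) \<in> G \<longleftrightarrow> j = s" and l: "l \<noteq> 0"
    and S: "represents (G - {(s, c)}) l w S" and ws: "w s = w c / (4 * l\<^sup>2)"
  shows "represents G l (w(s := w c / (2 * l\<^sup>2), c := w c / 2))
           (shear s ((1 / (2 * l)) *\<^sub>R axis c 1) ** S ** transpose (shear s ((1 / (2 * l)) *\<^sub>R axis c 1)))"
proof -
  let ?G' = "G - {(s, c)}"
  let ?N = "shear s ((1 / (2 * l)) *\<^sub>R axis c 1)"
  let ?w' = "w(s := w c / (2 * l\<^sup>2), c := w c / 2)"
  have sc: "s \<noteq> c"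
    using no_parents child by blast
  have col_s: "sem_col ?G' l s = axis s 1" and col_c: "sem_col ?G' l c = axis c 1"
    using no_parents parent sc by (auto simp: vec_eq_iff axis_def)
  have "transpose ?N *v sem_col G l i =
      (if i = s then sem_col ?G' l s + (1 / (2 * l)) *\<^sub>R sem_col ?G' l c
       else if i = c then (1 / 2) *\<^sub>R sem_col ?G' l c - l *\<^sub>R sem_col ?G' l s
       else sem_col ?G' l i)" for i
    using no_parents child parent sc l unfolding col_s col_c
    by (auto simp: transpose_shear_mult vec_eq_iff axis_def field_simps simp del: transpose_matrix_vector)
  moreover have "l * w s = w c / (4 * l)"
    using ws l by (simp add: field_simps power2_eq_square)
  moreover have "w s + w c / (4 * l\<^sup>2) = w c / (2 * l\<^sup>2)" "w c / 4 + l\<^sup>2 * w s = w c / 2"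
    using ws l by (simp_all add: field_simps power2_eq_square)
  ultimately have "bform (?N ** S ** transpose ?N) (sem_col G l i) (sem_col G l j) =
      (if i = j then ?w' i else 0)" for i j
    using represents_bform[OF S] sc
    by (cases "i = s"; cases "j = s"; cases "i = c"; cases "j = c")
      (simp_all add: bform_congruence power2_eq_square field_simps del: transpose_matrix_vector)
  moreover have "\<forall>i. 0 < ?w' i"
    using represents_pos[OF S] l by (auto intro!: divide_pos_pos)
  ultimately show ?thesis
    by (simp add: represents_iff_bform)
qed

lemma common_representation:
  fixes G H :: "('n::finite \<times> 'n) set"
  assumes "acyclic G" and "sem_model G \<subseteq> sem_model H" and "\<forall>i. 0 < w i"
  obtains S m v where "represents G l w S" and "represents H m v S"
proof -
  have "represents G l w (sem_covariance G l w)"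
    using assms(1,3) by (simp add: represents_iff_covariance)
  moreover from this have "sem_covariance G l w \<in> sem_model H"
    using assms(2) unfolding sem_model_def by blast
  ultimately show ?thesis
    using that unfolding sem_model_def by blast
qed

lemma isolate_sink_in_sem_model:
  assumes "S \<in> sem_model G" and "\<forall>j. (s, j) \<notin> G" and "0 < t"
  shows "isolate s t S \<in> sem_model {p\<in>G. snd p \<noteq> s}"
  using assms represents_isolate_sink unfolding sem_model_def by blast

lemma isolate_source_in_sem_model:
  assumes "S \<in> sem_model G" and "0 < t" and "\<forall>j. (j, s) \<notin> G"
    and "\<forall>j. (s, j) \<in> G \<longleftrightarrow> j = c" and "\<forall>j. (j, c) \<in> G \<longleftrightarrow> j = s"
  shows "isolate s t S \<in> sem_model (G - {(s, c)})"
  using assms represents_isolate_source_edge unfolding sem_model_def by blast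

lemma sem_model_subset_remove_sink_parents:
  fixes E F :: "('n::finite \<times> 'n) set"
  assumes E: "acyclic E" and sub: "sem_model E \<subseteq> sem_model F"
    and sink_E: "\<forall>j. (s, j) \<notin> E" and sink_F: "\<forall>j. (s, j) \<notin> F"
  shows "sem_model {p\<in>E. snd p \<noteq> s} \<subseteq> sem_model {p\<in>F. snd p \<noteq> s}"
proof
  fix S assume "S \<in> sem_model {p\<in>E. snd p \<noteq> s}"
  then obtain l w where S: "represents {p\<in>E. snd p \<noteq> s} l w S"
    unfolding sem_model_def by blast
  let ?N = "shear s (l *\<^sub>R (\<chi> k. if (k, s) \<in> E then 1 else 0))"
  have "?N ** S ** transpose ?N \<in> sem_model F"
    using represents_shear_sink[OF sink_E S] sub unfolding sem_model_def by blast
  then have "isolate s (w s) (?N ** S ** transpose ?N) \<in> sem_model {p\<in>F. snd p \<noteq> s}"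
    using isolate_sink_in_sem_model sink_F represents_pos[OF S] by blast
  moreover have "isolate s (w s) S = S"
    using isolate_isolated_vertex[OF acyclic_subset[OF E] S] sink_E by auto
  ultimately show "S \<in> sem_model {p\<in>F. snd p \<noteq> s}"
    by (simp add: isolate_shear)
qed

lemma sem_model_subset_remove_source_edge:
  fixes E F :: "('n::finite \<times> 'n) set"
  assumes E: "acyclic E" and sub: "sem_model E \<subseteq> sem_model F"
    and no_parents: "\<forall>j. (j, s) \<notin> E" and child: "\<forall>j. (s, j) \<in> E \<longleftrightarrow> j = c"
    and parent: "\<forall>j. (j, c) \<in> E \<longleftrightarrow> j = s" and sink: "\<forall>j. (s, j) \<notin> F"
  shows "sem_model (E - {(s, c)}) \<subseteq> sem_model {p\<in>F. snd p \<noteq> s}"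
proof
  fix S assume "S \<in> sem_model (E - {(s, c)})"
  then obtain l w where S: "represents (E - {(s, c)}) l w S"
    unfolding sem_model_def by blast
  have S_isolated: "isolate s (w s) S = S"
    using isolate_isolated_vertex[OF acyclic_subset[OF E] S] no_parents child by auto
  obtain T where "T \<in> sem_model E" and "isolate s (w s) T = S"
  proof (cases "l = 0")
    case True
    then have "represents E l w S"
      using S by (simp add: represents_def sem_matrix_zero)
    then show ?thesis
      using that S_isolated unfolding sem_model_def by blast
  next
    case False
    define z where "z = w c / (4 * l\<^sup>2)"
    let ?N = "shear s ((1 / (2 * l)) *\<^sub>R axis c 1)"
    have "{p\<in>E - {(s, c)}. snd p \<noteq> s} = E - {(s, c)}" and "\<forall>j. (s, j) \<notin> E - {(s, c)}"
      using no_parents child by auto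
    then have "represents (E - {(s, c)}) l (w(s := z)) (isolate s z S)"
      using represents_isolate_sink[OF S, of s z] represents_pos[OF S] False
      by (simp add: z_def)
    moreover have "(w(s := z)) s = (w(s := z)) c / (4 * l\<^sup>2)"
      using no_parents child by (auto simp: z_def)
    ultimately have "?N ** isolate s z S ** transpose ?N \<in> sem_model E"
      using represents_shear_source_edge[OF no_parents child parent False]
      unfolding sem_model_def by blast
    then show ?thesis
      using that S_isolated by (simp add: isolate_shear isolate_isolate)
  qed
  then show "S \<in> sem_model {p\<in>F. snd p \<noteq> s}"
    using isolate_sink_in_sem_model[of _ F s "w s"] sub sink represents_pos[OF S] by auto
qed

lemma sem_model_subset_restore_source_edge:
  fixes E F :: "('n::finite \<times> 'n) set"
  assumes F: "acyclic F" and sub: "sem_model F \<subseteq> sem_model E"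
    and no_parents: "\<forall>j. (j, s) \<notin> E" and child: "\<forall>j. (s, j) \<in> E \<longleftrightarrow> j = c"
    and parent: "\<forall>j. (j, c) \<in> E \<longleftrightarrow> j = s" and sink: "\<forall>j. (s, j) \<notin> F"
  shows "sem_model {p\<in>F. snd p \<noteq> s} \<subseteq> sem_model (E - {(s, c)})"
proof
  fix S assume "S \<in> sem_model {p\<in>F. snd p \<noteq> s}"
  then obtain m w where S: "represents {p\<in>F. snd p \<noteq> s} m w S"
    unfolding sem_model_def by blast
  let ?N = "shear s (m *\<^sub>R (\<chi> k. if (k, s) \<in> F then 1 else 0))"
  have "?N ** S ** transpose ?N \<in> sem_model E"
    using represents_shear_sink[OF sink S] sub unfolding sem_model_def by blast
  then have "isolate s (w s) (?N ** S ** transpose ?N) \<in> sem_model (E - {(s, c)})"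
    using isolate_source_in_sem_model represents_pos[OF S] no_parents child parent by blast
  moreover have "isolate s (w s) S = S"
    using isolate_isolated_vertex[OF acyclic_subset[OF F] S] sink by auto
  ultimately show "S \<in> sem_model (E - {(s, c)})"
    by (simp add: isolate_shear)
qed

section \<open>Identifiability\<close>

lemma two_scales_pattern:
  fixes a b :: "'a \<Rightarrow> real"
  assumes "\<And>l::real. \<exists>k. \<forall>j\<in>J. l\<^sup>2 * b j - l * a j = (if P j then k else 0)"
  shows "\<And>j. j \<in> J \<Longrightarrow> \<not> P j \<Longrightarrow> a j = 0 \<and> b j = 0"
    and "\<And>i j. i \<in> J \<Longrightarrow> j \<in> J \<Longrightarrow> P i \<Longrightarrow> P j \<Longrightarrow> a i = a j"
proof -
  obtain k1 where k1: "\<forall>j\<in>J. b j - a j = (if P j then k1 else 0)"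
    using assms[of 1] by auto
  obtain k2 where k2: "\<forall>j\<in>J. 4 * b j - 2 * a j = (if P j then k2 else 0)"
    using assms[of 2] by (auto simp: power2_eq_square)
  show "a j = 0 \<and> b j = 0" if "j \<in> J" "\<not> P j" for j
    using k1 k2 that by fastforce
  show "a i = a j" if "i \<in> J" "j \<in> J" "P i" "P j" for i j
  proof -
    have "b i - a i = b j - a j" and "4 * b i - 2 * a i = 4 * b j - 2 * a j"
      using k1 k2 that by auto
    then show ?thesis by linarith
  qed
qed

lemma acyclic_obtain_sink:
  fixes G :: "('n::finite \<times> 'n) set"
  assumes "acyclic G" and "G \<noteq> {}"
  obtains s k where "(k, s) \<in> G" and "\<forall>j. (s, j) \<notin> G"
proof -
  have "wf (G\<inverse>)"
    using assms(1) by (intro finite_acyclic_wf_converse) simp_all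
  moreover obtain x where "x \<in> Range G"
    using assms(2) by auto
  ultimately obtain s where "s \<in> Range G" and "\<forall>y. (y, s) \<in> G\<inverse> \<longrightarrow> y \<notin> Range G"
    using wf_eq_minimal[THEN iffD1] by metis
  then show ?thesis
    using that by blast
qed

lemma sink_precision_pattern:
  fixes E F :: "('n::finite \<times> 'n) set" and l :: real
  assumes E: "acyclic E" and F: "acyclic F" and sub: "sem_model E \<subseteq> sem_model F"
    and sink: "\<forall>j. (s, j) \<notin> F" and w: "\<forall>i. 0 < w i"
  shows "\<exists>k. \<forall>j\<in>-{s}.
    l\<^sup>2 * (\<Sum>i\<in>UNIV. if (j, i) \<in> E \<and> (s, i) \<in> E then 1 / w i else 0)
    - l * ((if (s, j) \<in> E then 1 / w j else 0) + (if (j, s) \<in> E then 1 / w s else 0))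
    = (if (j, s) \<in> F then k else 0)"
proof -
  obtain S m v where SE: "represents E l w S" and SF: "represents F m v S"
    using common_representation[OF E sub w] by blast
  then obtain k where "\<forall>j. j \<noteq> s \<longrightarrow> precision_col E l w s $ j = (if (j, s) \<in> F then k else 0)"
    using sink_precision_col[OF E F SE SF sink] by blast
  then show ?thesis
    using precision_col_nth[OF _ acyclic_loop_free[OF E] acyclic_loop_free[OF E]]
    by (intro exI[of _ k]) auto
qed

text \<open>With the weight \<open>1/3\<close> at \<open>c\<close>, the part linear in \<open>l\<close> of the precision entry at
  \<open>c\<close> is \<open>3\<close>, while at every other vertex it is at most \<open>2\<close>; so no other vertex can be
  a parent of \<open>s\<close> in \<open>F\<close> alongside \<open>c\<close>.\<close>
lemma sink_with_child_shape:
  fixes E F :: "('n::finite \<times> 'n) set"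
  assumes E: "acyclic E" and F: "acyclic F" and sub: "sem_model E \<subseteq> sem_model F"
    and sink: "\<forall>j. (s, j) \<notin> F" and sc: "(s, c) \<in> E"
  shows "\<forall>j. (j, s) \<notin> E" and "\<forall>j. (s, j) \<in> E \<longleftrightarrow> j = c"
    and "\<forall>j. (j, c) \<in> E \<longleftrightarrow> j = s" and "\<forall>j. (j, s) \<in> F \<longleftrightarrow> j = c"
proof -
  define w where "w i = (if i = c then 1 / 3 else 1 :: real)" for i
  define a where "a j = (if (s, j) \<in> E then 1 / w j else 0) + (if (j, s) \<in> E then 1 / w s else 0)"
    for j
  define b where "b j = (\<Sum>i\<in>UNIV. if (j, i) \<in> E \<and> (s, i) \<in> E then 1 / w i else 0)" for j
  have irr: "\<And>x. (x, x) \<notin> E"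
    using acyclic_loop_free[OF E] .
  have s_ne_c: "s \<noteq> c"
    using sc irr by blast
  have "\<forall>i. 0 < w i"
    by (simp add: w_def)
  then have pattern: "\<exists>k. \<forall>j\<in>-{s}. l\<^sup>2 * b j - l * a j = (if (j, s) \<in> F then k else 0)"
    for l
    unfolding a_def b_def by (rule sink_precision_pattern[OF E F sub sink])
  note outside = two_scales_pattern(1)[OF pattern] and inside = two_scales_pattern(2)[OF pattern]
  have a_c: "a c = 3"
    using sc acyclic_reverse_edge[OF E sc] s_ne_c by (simp add: a_def w_def)
  have a_le: "a j \<le> 2" if "j \<noteq> c" for j
    using that s_ne_c by (simp add: a_def w_def)
  have b_pos: "b j \<noteq> 0" if "(j, c) \<in> E" for j
  proof -
    have "(if (j, c) \<in> E \<and> (s, c) \<in> E then 1 / w c else 0) \<le> b j"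
      unfolding b_def by (rule member_le_sum) (auto simp: w_def)
    then show ?thesis
      using that sc by (simp add: w_def)
  qed
  have cs_F: "(c, s) \<in> F"
    using outside[of c] s_ne_c a_c by force
  have other: "(s, j) \<notin> E \<and> (j, s) \<notin> E \<and> (j, c) \<notin> E \<and> (j, s) \<notin> F"
    if "j \<noteq> s" "j \<noteq> c" for j
  proof -
    have "(j, s) \<notin> F"
      using inside[of j c] a_le[of j] a_c cs_F that s_ne_c by force
    then have "a j = 0" and "b j = 0"
      using outside[of j] that by auto
    then show ?thesis
      using b_pos \<open>(j, s) \<notin> F\<close> that by (auto simp: a_def w_def split: if_splits)
  qed
  show "\<forall>j. (j, s) \<notin> E"
    using other irr acyclic_reverse_edge[OF E sc] by metis
  show "\<forall>j. (s, j) \<in> E \<longleftrightarrow> j = c"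
    using other irr sc by metis
  show "\<forall>j. (j, c) \<in> E \<longleftrightarrow> j = s"
    using other irr sc by metis
  show "\<forall>j. (j, s) \<in> F \<longleftrightarrow> j = c"
    using other acyclic_loop_free[OF F] cs_F by metis
qed

definition same_or_reversed_edge :: "('n \<times> 'n) set \<Rightarrow> ('n \<times> 'n) set \<Rightarrow> bool" where
  "same_or_reversed_edge E F \<longleftrightarrow> F = E \<or> (\<exists>a b. E = {(a, b)} \<and> F = {(b, a)})"

lemma same_or_reversed_edge_sym: "same_or_reversed_edge E F \<Longrightarrow> same_or_reversed_edge F E"
  by (auto simp: same_or_reversed_edge_def)

lemma card_remove_parents_less:
  fixes G :: "('n::finite \<times> 'n) set"
  assumes "(k, s) \<in> G"
  shows "card {p\<in>G. snd p \<noteq> s} < card G"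
proof (rule psubset_card_mono)
  show "{p\<in>G. snd p \<noteq> s} \<subset> G"
    using assms by force
qed simp

lemma common_sink_same_parents:
  fixes G H :: "('n::finite \<times> 'n) set"
  assumes G: "acyclic G" and H: "acyclic H"
    and SG: "represents G l w S" and SH: "represents H m v S"
    and sink_G: "\<forall>j. (t, j) \<notin> G" and sink_H: "\<forall>j. (t, j) \<notin> H"
    and pt: "(p, t) \<in> G" and l: "l \<noteq> 0"
  shows "m = l" and "\<forall>j. (j, t) \<in> G \<longleftrightarrow> (j, t) \<in> H"
proof -
  have eq: "(if (j, t) \<in> G then l else 0) = (if (j, t) \<in> H then m else 0)" if "j \<noteq> t" for j
    using arg_cong[OF sink_parents_agree[OF G H SG SH sink_G sink_H], of "\<lambda>x. x $ j"] that
    by simp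
  have "p \<noteq> t"
    using pt acyclic_loop_free[OF G] by blast
  then have "l = (if (p, t) \<in> H then m else 0)"
    using eq[of p] pt by simp
  then show "m = l"
    using l by (simp split: if_splits)
  show "\<forall>j. (j, t) \<in> G \<longleftrightarrow> (j, t) \<in> H"
  proof
    fix j
    show "(j, t) \<in> G \<longleftrightarrow> (j, t) \<in> H"
    proof (cases "j = t")
      case False
      then show ?thesis
        using eq[of j] \<open>m = l\<close> l by (auto split: if_splits)
    qed (use acyclic_loop_free[OF G] acyclic_loop_free[OF H] in blast)
  qed
qed

lemma same_or_reversed_edge_common_sink:
  fixes E F :: "('n::finite \<times> 'n) set"
  assumes IH: "\<And>E' F' :: ('n \<times> 'n) set. card E' + card F' < card E + card F \<Longrightarrow> acyclic E'
      \<Longrightarrow> acyclic F' \<Longrightarrow> sem_model E' = sem_model F' \<Longrightarrow> same_or_reversed_edge E' F'"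
    and E: "acyclic E" and F: "acyclic F" and eq: "sem_model E = sem_model F"
    and ks: "(k, s) \<in> F" and sink_E: "\<forall>j. (s, j) \<notin> E" and sink_F: "\<forall>j. (s, j) \<notin> F"
  shows "same_or_reversed_edge E F"
proof -
  define E' where "E' = {p\<in>E. snd p \<noteq> s}"
  define F' where "F' = {p\<in>F. snd p \<noteq> s}"
  have FE: "sem_model F \<subseteq> sem_model E"
    using eq by simp
  obtain S m v where SF: "represents F 1 (\<lambda>_. 1) S" and SE: "represents E m v S"
    using common_representation[OF F FE, of "\<lambda>_. 1" 1] by auto
  have m: "m = 1" and parents: "\<forall>j. (j, s) \<in> F \<longleftrightarrow> (j, s) \<in> E"
    using common_sink_same_parents[OF F E SF SE sink_F sink_E ks] by simp_all
  have "sem_model E' = sem_model F'"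
    unfolding E'_def F'_def using eq
    by (intro subset_antisym) (simp_all add: sem_model_subset_remove_sink_parents E F sink_E sink_F)
  moreover have "card E' + card F' < card E + card F"
    using card_remove_parents_less[OF ks] card_mono[of E E'] unfolding E'_def F'_def by fastforce
  moreover have "acyclic E'" and "acyclic F'"
    unfolding E'_def F'_def by (auto intro: acyclic_subset[OF E] acyclic_subset[OF F])
  ultimately have "same_or_reversed_edge E' F'"
    by (intro IH)
  then consider "F' = E'" | a b where "E' = {(a, b)}" and "F' = {(b, a)}"
    unfolding same_or_reversed_edge_def by blast
  then show ?thesis
  proof cases
    case 1
    then have "F = E"
      using parents unfolding E'_def F'_def by fastforce
    then show ?thesis
      by (simp add: same_or_reversed_edge_def)
  next
    case (2 a b)
    then have "(a, b) \<in> E'"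
      by simp
    then have "a \<noteq> s" "b \<noteq> s" "a \<noteq> b"
      using sink_E acyclic_loop_free[OF E] unfolding E'_def by auto
    moreover have "(x, y) \<in> E \<longleftrightarrow> x = a \<and> y = b" and "(x, y) \<in> F \<longleftrightarrow> x = b \<and> y = a"
      if "y \<noteq> s" for x y
      using 2 that unfolding E'_def F'_def by (simp_all add: set_eq_iff) blast+
    ultimately have "1 * (1 + 1\<^sup>2 * 1) = (1::real) * 1"
      using reversed_source_edge[OF SF SE, of b a] m by simp
    then show ?thesis
      by simp
  qed
qed

lemma reversed_path_unit_coefficients:
  fixes H :: "('n::finite \<times> 'n) set"
  assumes SG: "represents G 1 (\<lambda>_. 1) S" and H: "acyclic H" and SH: "represents H m v S"
    and s_G: "\<forall>k. (k, s) \<notin> G" and c_G: "\<forall>k. (k, c) \<in> G \<longleftrightarrow> k = s"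
    and b_G: "\<forall>k. (k, b) \<in> G \<longleftrightarrow> k = c"
    and b_H: "\<forall>k. (k, b) \<notin> H" and c_H: "\<forall>k. (k, c) \<in> H \<longleftrightarrow> k = b"
    and sink: "\<forall>j. (s, j) \<notin> H" and s_H: "\<forall>k. (k, s) \<in> H \<longleftrightarrow> k = c"
  shows False
proof -
  have "S $ b $ c = 2" "S $ b $ b = 3"
    using represents_source_path[OF SG s_G c_G b_G] by simp_all
  moreover have "S $ c $ s = 1" "S $ c $ c = 2"
    using represents_source_edge[OF SG s_G c_G] by simp_all
  moreover have "S $ b $ b = v b" "S $ b $ c = m * v b"
    using represents_source_edge[OF SH b_H c_H] by simp_all
  moreover have "S $ c $ s = m * S $ c $ c"
    by (rule represents_sink_single_parent[OF H SH sink s_H])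
  ultimately show False
    by simp
qed

lemma same_or_reversed_edge_insert_reversed:
  fixes E F :: "('n::finite \<times> 'n) set"
  assumes same: "same_or_reversed_edge E F"
    and E: "acyclic (insert (s, c) E)" and F: "acyclic (insert (c, s) F)"
    and sub: "sem_model (insert (s, c) E) \<subseteq> sem_model (insert (c, s) F)"
    and into_s: "\<forall>x. (x, s) \<notin> E" and from_s: "\<forall>x. (s, x) \<notin> E" and into_c: "\<forall>x. (x, c) \<notin> E"
    and into_s_F: "\<forall>x. (x, s) \<notin> F"
  shows "same_or_reversed_edge (insert (s, c) E) (insert (c, s) F)"
proof -
  let ?E = "insert (s, c) E" and ?F = "insert (c, s) F"
  have sc: "s \<noteq> c"
    using acyclic_loop_free[OF E] by blast
  have "\<forall>i. 0 < (\<lambda>_. 1::real) i" and "\<forall>i. 0 < (\<lambda>i. if i = c then 2 else 1::real) i"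
    by simp_all
  then obtain S m v S' m' v'
    where SE: "represents ?E 1 (\<lambda>_. 1) S" and SF: "represents ?F m v S"
      and SE': "represents ?E 1 (\<lambda>i. if i = c then 2 else 1) S'" and SF': "represents ?F m' v' S'"
    using common_representation[OF E sub] by metis
  consider "F = E" "E = {}" | "F = E" "E \<noteq> {}" | a b where "E = {(a, b)}" "F = {(b, a)}" "a \<noteq> c"
    | b where "E = {(c, b)}" "F = {(b, c)}"
    using same unfolding same_or_reversed_edge_def by blast
  then show ?thesis
  proof cases
    case 1
    then show ?thesis
      by (auto simp: same_or_reversed_edge_def)
  next
    case 2
    have "acyclic E"
      using acyclic_subset[OF E] by blast
    then obtain t p where pt: "(p, t) \<in> E" and sink: "\<forall>j. (t, j) \<notin> E"
      using acyclic_obtain_sink \<open>E \<noteq> {}\<close> by blast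
    have "t \<noteq> s" "t \<noteq> c"
      using pt into_s into_c by auto
    then have "\<forall>j. (t, j) \<notin> ?E" and "\<forall>j. (t, j) \<notin> ?F" and "(p, t) \<in> ?E"
      using sink pt 2 by auto
    from common_sink_same_parents(1)[OF E F SE SF this] have "m = 1"
      by simp
    moreover have "\<forall>k. (k, s) \<notin> ?E" "\<forall>k. (k, c) \<in> ?E \<longleftrightarrow> k = s"
      and "\<forall>k. (k, c) \<notin> ?F" "\<forall>k. (k, s) \<in> ?F \<longleftrightarrow> k = c"
      using into_s into_c 2 sc by auto
    then have "m * (1 + 1\<^sup>2 * 1) = 1 * 1"
      by (rule reversed_source_edge[OF SE SF])
    ultimately show ?thesis
      by simp
  next
    case (3 a b)
    have "a \<noteq> s" "b \<noteq> s" "b \<noteq> c" "a \<noteq> b"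
      using 3 into_s from_s into_c acyclic_loop_free[OF E] by auto
    then have ab: "\<forall>k. (k, a) \<notin> ?E" "\<forall>k. (k, b) \<in> ?E \<longleftrightarrow> k = a"
        "\<forall>k. (k, b) \<notin> ?F" "\<forall>k. (k, a) \<in> ?F \<longleftrightarrow> k = b"
      and sc': "\<forall>k. (k, s) \<notin> ?E" "\<forall>k. (k, c) \<in> ?E \<longleftrightarrow> k = s"
        "\<forall>k. (k, c) \<notin> ?F" "\<forall>k. (k, s) \<in> ?F \<longleftrightarrow> k = c"
      using 3 sc by auto
    have "m' * 2 = 1"
      using reversed_source_edge[OF SE' SF' ab] \<open>a \<noteq> c\<close> \<open>b \<noteq> c\<close> by simp
    moreover have "m' * 3 = 1"
      using reversed_source_edge[OF SE' SF' sc'] sc by simp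
    ultimately show ?thesis
      by simp
  next
    case (4 b)
    have "b \<noteq> s" "b \<noteq> c"
      using 4 into_s acyclic_loop_free[OF E] by auto
    then have "\<forall>k. (k, s) \<notin> ?E" "\<forall>k. (k, c) \<in> ?E \<longleftrightarrow> k = s" "\<forall>k. (k, b) \<in> ?E \<longleftrightarrow> k = c"
      and "\<forall>k. (k, b) \<notin> ?F" "\<forall>k. (k, c) \<in> ?F \<longleftrightarrow> k = b"
      and "\<forall>j. (s, j) \<notin> ?F" "\<forall>k. (k, s) \<in> ?F \<longleftrightarrow> k = c"
      using 4 sc by auto
    then have False
      by (rule reversed_path_unit_coefficients[OF SE F SF])
    then show ?thesis ..
  qed
qed

lemma same_or_reversed_edge_sink_with_child:
  fixes E F :: "('n::finite \<times> 'n) set"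
  assumes IH: "\<And>E' F' :: ('n \<times> 'n) set. card E' + card F' < card E + card F \<Longrightarrow> acyclic E'
      \<Longrightarrow> acyclic F' \<Longrightarrow> sem_model E' = sem_model F' \<Longrightarrow> same_or_reversed_edge E' F'"
    and E: "acyclic E" and F: "acyclic F" and eq: "sem_model E = sem_model F"
    and sink: "\<forall>j. (s, j) \<notin> F" and sc: "(s, c) \<in> E"
  shows "same_or_reversed_edge E F"
proof -
  define E' where "E' = E - {(s, c)}"
  define F' where "F' = {p\<in>F. snd p \<noteq> s}"
  have EF: "sem_model E \<subseteq> sem_model F" and FE: "sem_model F \<subseteq> sem_model E"
    using eq by simp_all
  note shape = sink_with_child_shape[OF E F EF sink sc]
  have E_eq: "E = insert (s, c) E'"
    using sc unfolding E'_def by blast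
  have F_eq: "F = insert (c, s) F'"
  proof -
    have "(x, y) \<in> F \<longleftrightarrow> (x, y) = (c, s) \<or> (x, y) \<in> F'" for x y
      using shape(4) unfolding F'_def by (cases "y = s") simp_all
    then show ?thesis
      by auto
  qed
  have "sem_model E' \<subseteq> sem_model F'"
    unfolding E'_def F'_def
    by (rule sem_model_subset_remove_source_edge[OF E EF shape(1-3) sink])
  moreover have "sem_model F' \<subseteq> sem_model E'"
    unfolding E'_def F'_def
    by (rule sem_model_subset_restore_source_edge[OF F FE shape(1-3) sink])
  moreover have "card E' < card E"
    unfolding E'_def by (rule card_Diff1_less[OF _ sc]) simp
  moreover have "card F' < card F"
    unfolding F'_def by (rule card_remove_parents_less[of c]) (simp add: shape(4))
  moreover have "acyclic E'" and "acyclic F'"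
    unfolding E'_def F'_def by (auto intro: acyclic_subset[OF E] acyclic_subset[OF F])
  ultimately have "same_or_reversed_edge E' F'"
    by (intro IH) auto
  moreover have "\<forall>x. (x, s) \<notin> E'" and "\<forall>x. (s, x) \<notin> E'" and "\<forall>x. (x, c) \<notin> E'"
    using shape(1-3) by (simp_all add: E'_def)
  moreover have "\<forall>x. (x, s) \<notin> F'"
    by (simp add: F'_def)
  ultimately show ?thesis
    using same_or_reversed_edge_insert_reversed[of E' F' s c] E F EF
    unfolding E_eq F_eq by blast
qed

lemma sem_model_eq_imp_same_or_reversed_edge:
  fixes E F :: "('n::finite \<times> 'n) set"
  assumes "acyclic E" and "acyclic F" and "sem_model E = sem_model F"
  shows "same_or_reversed_edge E F"
  using assms
proof (induction "card E + card F" arbitrary: E F rule: less_induct)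
  case less
  have step: "same_or_reversed_edge G H"
    if card: "card G + card H = card E + card F" and G: "acyclic G" and H: "acyclic H"
      and eq: "sem_model G = sem_model H" and ne: "H \<noteq> {}" for G H :: "('n \<times> 'n) set"
  proof -
    have IH: "same_or_reversed_edge E' F'"
      if "card E' + card F' < card G + card H" "acyclic E'" "acyclic F'"
        "sem_model E' = sem_model F'" for E' F' :: "('n \<times> 'n) set"
      using less.hyps that card by simp
    obtain s k where ks: "(k, s) \<in> H" and sink: "\<forall>j. (s, j) \<notin> H"
      using acyclic_obtain_sink[OF H ne] by blast
    show ?thesis
    proof (cases "\<forall>j. (s, j) \<notin> G")
      case True
      show ?thesis
        by (rule same_or_reversed_edge_common_sink[OF IH G H eq ks True sink])
    next
      case False
      then obtain c where sc: "(s, c) \<in> G"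
        by blast
      show ?thesis
        by (rule same_or_reversed_edge_sink_with_child[OF IH G H eq sink sc])
    qed
  qed
  show ?case
  proof (cases "F = {}")
    case False
    then show ?thesis
      using step less.prems by blast
  next
    case True
    then show ?thesis
      using step[of F E] less.prems same_or_reversed_edge_sym
      by (cases "E = {}") (auto simp: same_or_reversed_edge_def add.commute)
  qed
qed

theorem theorem5p8:
  fixes E F :: "('n::finite \<times> 'n) set"
    and c :: "'n \<times> 'n \<Rightarrow> 'c" and c' :: "'n \<times> 'n \<Rightarrow> 'd"
  assumes "is_dag E"
    and "\<forall>e\<in>E. \<forall>f\<in>E. c e = c f"
    and "card E \<ge> 2"
    and "is_dag F"
    and "\<forall>e\<in>F. \<forall>f\<in>F. c' e = c' f"
    and "colored_model F c' = colored_model E c"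
  shows "F = E"
proof -
  have E: "acyclic E" and F: "acyclic F"
    using assms(1,4) by (simp_all add: is_dag_def)
  have "sem_model E = sem_model F"
    using colored_model_single_color[OF E assms(2)] colored_model_single_color[OF F assms(5)]
      assms(6) by simp
  then have "same_or_reversed_edge E F"
    by (rule sem_model_eq_imp_same_or_reversed_edge[OF E F])
  then show "F = E"
    using assms(3) by (auto simp: same_or_reversed_edge_def)
qed

end
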